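(* Let $\theta$ be the parameters of an Elman RNN with $L$ layers such that every bias vector $\mathbf{b}^\ell$ ($0\le\ell\le L-1$) has all entries nonzero, and let $\mathcal{X}(\theta)$ be as defined below. Suppose $\theta\in\mathcal{X}(\theta)$ and $\theta'=\mathcal{P}(\theta)\in\mathcal{X}(\theta)$ where $\mathcal{P}=(\mathbf{I},\tilde{\mathbf{P}}^1\mathbf{D}^1,\dots,\tilde{\mathbf{P}}^{L-1}\mathbf{D}^{L-1},\mathbf{I})$ with each $\tilde{\mathbf{P}}^\ell$ a permutation matrix and each $\mathbf{D}^\ell$ a diagonal matrix with strictly positive diagonal entries. Then $\mathbf{D}^\ell=\mathbf{I}_{d_\ell}$ for all $0<\ell<L$.
   Context: Elman RNN: parameters $\theta=(\mathbf{W}_{\mathrm{rec}}^{\ell+1},\mathbf{W}_{\mathrm{ff}}^{\ell},\mathbf{b}^{\ell})_{0\le\ell\le L-1}$ with $\mathbf{W}_{\mathrm{ff}}^{\ell}\in\mathbb{R}^{d_{\ell+1}\times d_\ell}$, $\mathbf{W}_{\mathrm{rec}}^{\ell+1}\in\mathbb{R}^{d_{\ell+1}\times d_{\ell+1}}$, $\mathbf{b}^\ell\in\mathbb{R}^{d_{\ell+1}}$. An element $\mathcal{P}=(\mathbf{P}^0,\dots,\mathbf{P}^L)$ with $\mathbf{P}^0=\mathbf{I}$, $\mathbf{P}^L=\mathbf{I}$ and invertible $\mathbf{P}^\ell$ acts on $\theta$ by replacing, for each $1\le\ell\le L$, $(\mathbf{W}_{\mathrm{rec}}^{\ell},\mathbf{W}_{\mathrm{ff}}^{\ell-1},\mathbf{b}^{\ell-1})$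 with $(\mathbf{P}^\ell\mathbf{W}_{\mathrm{rec}}^{\ell}(\mathbf{P}^\ell)^{-1},\ \mathbf{P}^\ell\mathbf{W}_{\mathrm{ff}}^{\ell-1}(\mathbf{P}^{\ell-1})^{-1},\ \mathbf{P}^\ell\mathbf{b}^{\ell-1})$, giving $\mathcal{P}(\theta)$. $\mathcal{G}_{\mathrm{scaled}}$ is the set of such $\mathcal{P}$ with each $\mathbf{P}^\ell=\tilde{\mathbf{P}}^\ell\mathbf{D}^\ell$ ($1\le\ell\le L-1$), $\tilde{\mathbf{P}}^\ell$ a permutation matrix, $\mathbf{D}^\ell$ diagonal with strictly positive diagonal. Norm: $\|\theta\|_2^2=\|\mathbf{W}_{\mathrm{ff}}^{L-1}\|_F^2+\|\mathbf{b}^{L-1}\|^2+\sum_{0<\ell<L}(\|\mathbf{W}_{\mathrm{rec}}^{\ell}\|_F^2+\|\mathbf{W}_{\mathrm{ff}}^{\ell-1}\|_F^2+\|\mathbf{b}^{\ell-1}\|^2)$. $\mathcal{X}(\theta)$ is the set of $\theta'$ minimizing $\|\theta'\|_2$ subject to $\theta'=\mathcal{P}(\theta)$ for some $\mathcal{P}\in\mathcal{G}_{\mathrm{scaled}}$. *)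

theory Defs
  imports "Jordan_Normal_Form.Matrix" "HOL-Combinatorics.Permutations"
begin

(* Layer dimensions d :: nat \<Rightarrow> nat (d 0, ..., d L).
   Wff l : d(l+1) x d l   (0 \<le> l \<le> L-1)
   Wrec l : d l x d l     (1 \<le> l \<le> L)
   b l : vector of length d(l+1)  (0 \<le> l \<le> L-1)
   Entries at other indices are irrelevant and left untouched by the action. *)
record rnn_params =
  Wrec :: "nat \<Rightarrow> real mat"
  Wff  :: "nat \<Rightarrow> real mat"
  bias :: "nat \<Rightarrow> real vec"

definition rnn_wf :: "nat \<Rightarrow> (nat \<Rightarrow> nat) \<Rightarrow> rnn_params \<Rightarrow> bool" where
  "rnn_wf L d \<theta> \<longleftrightarrow> (\<forall>l<L.
      Wff \<theta> l \<in> carrier_mat (d (Suc l)) (d l) \<and>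
      Wrec \<theta> (Suc l) \<in> carrier_mat (d (Suc l)) (d (Suc l)) \<and>
      bias \<theta> l \<in> carrier_vec (d (Suc l)))"

definition minv :: "nat \<Rightarrow> real mat \<Rightarrow> real mat" where
  "minv n A = (SOME B. B \<in> carrier_mat n n \<and> A * B = 1\<^sub>m n \<and> B * A = 1\<^sub>m n)"

definition perm_matrix :: "nat \<Rightarrow> real mat \<Rightarrow> bool" where
  "perm_matrix n P \<longleftrightarrow> P \<in> carrier_mat n n \<and>
     (\<exists>\<sigma>. \<sigma> permutes {..<n} \<and> (\<forall>i<n. \<forall>j<n. P $$ (i, j) = (if i = \<sigma> j then 1 else 0)))"

definition pos_diag_matrix :: "nat \<Rightarrow> real mat \<Rightarrow> bool" where
  "pos_diag_matrix n D \<longleftrightarrow> D \<in> carrier_mat n n \<and> diagonal_mat D \<and> (\<forall>i<n. D $$ (i, i) > 0)"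

definition rnn_act :: "nat \<Rightarrow> (nat \<Rightarrow> nat) \<Rightarrow> (nat \<Rightarrow> real mat) \<Rightarrow> rnn_params \<Rightarrow> rnn_params" where
  "rnn_act L d P \<theta> =
     \<lparr> Wrec = (\<lambda>l. if 1 \<le> l \<and> l \<le> L then P l * Wrec \<theta> l * minv (d l) (P l) else Wrec \<theta> l),
       Wff = (\<lambda>k. if k < L then P (Suc k) * Wff \<theta> k * minv (d k) (P k) else Wff \<theta> k),
       bias = (\<lambda>k. if k < L then P (Suc k) *\<^sub>v bias \<theta> k else bias \<theta> k) \<rparr>"

definition G_scaled :: "nat \<Rightarrow> (nat \<Rightarrow> nat) \<Rightarrow> (nat \<Rightarrow> real mat) set" where
  "G_scaled L d = {P. P 0 = 1\<^sub>m (d 0) \<and> P L = 1\<^sub>m (d L) \<and>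
     (\<forall>l. 1 \<le> l \<and> l \<le> L - 1 \<longrightarrow>
        (\<exists>Pt D. perm_matrix (d l) Pt \<and> pos_diag_matrix (d l) D \<and> P l = Pt * D))}"

definition frob2 :: "real mat \<Rightarrow> real" where
  "frob2 A = (\<Sum>i<dim_row A. \<Sum>j<dim_col A. (A $$ (i, j))\<^sup>2)"

definition vnorm2 :: "real vec \<Rightarrow> real" where
  "vnorm2 v = (\<Sum>i<dim_vec v. (v $ i)\<^sup>2)"

definition rnn_norm :: "nat \<Rightarrow> rnn_params \<Rightarrow> real" where
  "rnn_norm L \<theta> = sqrt (frob2 (Wff \<theta> (L - 1)) + vnorm2 (bias \<theta> (L - 1)) +
     (\<Sum>l\<in>{1..<L}. frob2 (Wrec \<theta> l) + frob2 (Wff \<theta> (l - 1)) + vnorm2 (bias \<theta> (l - 1))))"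

definition X_min :: "nat \<Rightarrow> (nat \<Rightarrow> nat) \<Rightarrow> rnn_params \<Rightarrow> rnn_params set" where
  "X_min L d \<theta> = {\<theta>'. (\<exists>P\<in>G_scaled L d. \<theta>' = rnn_act L d P \<theta>) \<and>
      (\<forall>P\<in>G_scaled L d. rnn_norm L \<theta>' \<le> rnn_norm L (rnn_act L d P \<theta>))}"

end

theory Submission
  imports Defs
begin

text \<open>
  A product of a permutation matrix and a positive diagonal matrix is a monomial matrix, and
  acting by such matrices multiplies each parameter entry by the ratio of the scalings of the two
  neurons it connects; the permutations do not change the norm. So the squared norm after the action
  by scalings \<open>\<delta>\<close> is an energy \<open>E(\<delta>)\<close> that depends only on \<open>\<delta>\<close>. Termwise AM-GM gives
  \<open>2 E(\<surd>\<delta>) + \<Sum> (\<delta> - 1)\<^sup>2 b\<^sup>2 \<le> E(1) + E(\<delta>)\<close>, the slack coming from the biases, whose entries only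
  carry one scaling. Minimality of \<open>\<theta>\<close> gives \<open>E(1) \<le> E(\<surd>\<delta>)\<close> and minimality of the transformed parameters gives
  \<open>E(\<delta>) \<le> E(1)\<close>; hence the slack vanishes, and as the biases have no zero entries, \<open>\<delta> = 1\<close>.
\<close>

definition monomial_mat :: "nat \<Rightarrow> (nat \<Rightarrow> nat) \<Rightarrow> (nat \<Rightarrow> 'a::zero) \<Rightarrow> 'a mat" where
  "monomial_mat n \<sigma> x = mat n n (\<lambda>(i, j). if i = \<sigma> j then x j else 0)"

lemma monomial_mat_carrier [simp]: "monomial_mat n \<sigma> x \<in> carrier_mat n n"
  by (simp add: monomial_mat_def)

lemma dim_monomial_mat [simp]:
  "dim_row (monomial_mat n \<sigma> x) = n" "dim_col (monomial_mat n \<sigma> x) = n"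
  by (simp_all add: monomial_mat_def)

lemma monomial_mat_cong:
  "(\<And>j. j < n \<Longrightarrow> \<sigma> j = \<tau> j \<and> x j = y j) \<Longrightarrow> monomial_mat n \<sigma> x = monomial_mat n \<tau> y"
  unfolding monomial_mat_def by (rule eq_matI) auto

lemma monomial_mat_id_one: "monomial_mat n id (\<lambda>_. 1) = 1\<^sub>m n"
  unfolding monomial_mat_def by (rule eq_matI) auto

lemma mult_monomial_mat:
  fixes A :: "'a::semiring_0 mat"
  assumes A: "A \<in> carrier_mat k n" and \<tau>: "\<tau> permutes {..<n}"
  shows "A * monomial_mat n \<tau> y = mat k n (\<lambda>(i, j). A $$ (i, \<tau> j) * y j)"
proof (rule eq_matI)
  fix i j assume "i < dim_row (mat k n (\<lambda>(i, j). A $$ (i, \<tau> j) * y j))"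
    and "j < dim_col (mat k n (\<lambda>(i, j). A $$ (i, \<tau> j) * y j))"
  then have i: "i < k" and j: "j < n" by auto
  have "\<tau> j < n" using permutes_in_image[OF \<tau>] j by simp
  then show "(A * monomial_mat n \<tau> y) $$ (i, j) = mat k n (\<lambda>(i, j). A $$ (i, \<tau> j) * y j) $$ (i, j)"
    using A i j
    by (simp add: monomial_mat_def scalar_prod_def if_distrib if_distribR sum.delta sum.delta'
        cong: if_cong)
qed (use A in \<open>auto simp: monomial_mat_def\<close>)

lemma monomial_mat_mult_index:
  fixes A :: "'a::semiring_0 mat"
  assumes A: "A \<in> carrier_mat n k" and \<sigma>: "\<sigma> permutes {..<n}" and i: "i < n" and j: "j < k"
  shows "(monomial_mat n \<sigma> x * A) $$ (\<sigma> i, j) = x i * A $$ (i, j)"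
proof -
  have "\<sigma> i < n" using permutes_in_image[OF \<sigma>] i by simp
  then show ?thesis
    using A i j permutes_inj[OF \<sigma>]
    by (simp add: monomial_mat_def scalar_prod_def inj_eq if_distrib if_distribR sum.delta sum.delta'
        cong: if_cong)
qed

lemma monomial_mat_mult_vec_index:
  fixes v :: "'a::semiring_0 vec"
  assumes v: "v \<in> carrier_vec n" and \<sigma>: "\<sigma> permutes {..<n}" and i: "i < n"
  shows "(monomial_mat n \<sigma> x *\<^sub>v v) $ \<sigma> i = x i * v $ i"
proof -
  have "\<sigma> i < n" using permutes_in_image[OF \<sigma>] i by simp
  then show ?thesis
    using v i permutes_inj[OF \<sigma>]
    by (simp add: monomial_mat_def scalar_prod_def inj_eq if_distrib if_distribR sum.delta sum.delta'
        cong: if_cong)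
qed

lemma monomial_mat_mult_monomial_mat:
  fixes x y :: "nat \<Rightarrow> 'a::semiring_0"
  assumes "\<tau> permutes {..<n}"
  shows "monomial_mat n \<sigma> x * monomial_mat n \<tau> y = monomial_mat n (\<lambda>j. \<sigma> (\<tau> j)) (\<lambda>j. x (\<tau> j) * y j)"
  unfolding mult_monomial_mat[OF monomial_mat_carrier assms]
  using permutes_in_image[OF assms] by (intro eq_matI) (auto simp: monomial_mat_def)

(* Plain \<open>inv\<close> is the group inverse of HOL-Algebra in this theory context. *)
lemma monomial_mat_inverse:
  fixes x :: "nat \<Rightarrow> 'a::field"
  assumes \<sigma>: "\<sigma> permutes {..<n}" and x: "\<forall>j<n. x j \<noteq> 0"
  defines "x' \<equiv> \<lambda>j. inverse (x (Hilbert_Choice.inv \<sigma> j))"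
  shows "monomial_mat n \<sigma> x * monomial_mat n (Hilbert_Choice.inv \<sigma>) x' = 1\<^sub>m n"
    and "monomial_mat n (Hilbert_Choice.inv \<sigma>) x' * monomial_mat n \<sigma> x = 1\<^sub>m n"
proof -
  have inv_lt: "Hilbert_Choice.inv \<sigma> j < n" if "j < n" for j
    using permutes_in_image[OF permutes_inv[OF \<sigma>]] that by simp
  show "monomial_mat n \<sigma> x * monomial_mat n (Hilbert_Choice.inv \<sigma>) x' = 1\<^sub>m n"
    unfolding monomial_mat_mult_monomial_mat[OF permutes_inv[OF \<sigma>]] monomial_mat_id_one[symmetric]
    using inv_lt x permutes_inverses(1)[OF \<sigma>] by (intro monomial_mat_cong) (simp add: x'_def)
  show "monomial_mat n (Hilbert_Choice.inv \<sigma>) x' * monomial_mat n \<sigma> x = 1\<^sub>m n"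
    unfolding monomial_mat_mult_monomial_mat[OF \<sigma>] monomial_mat_id_one[symmetric]
    using x permutes_inverses(2)[OF \<sigma>] by (intro monomial_mat_cong) (simp add: x'_def)
qed

lemma minv_eqI:
  assumes A: "A \<in> carrier_mat n n" and B: "B \<in> carrier_mat n n"
    and AB: "A * B = 1\<^sub>m n" and BA: "B * A = 1\<^sub>m n"
  shows "minv n A = B"
proof -
  obtain C where C: "C \<in> carrier_mat n n" "A * C = 1\<^sub>m n" "C * A = 1\<^sub>m n" and "minv n A = C"
    using someI_ex[of "\<lambda>C. C \<in> carrier_mat n n \<and> A * C = 1\<^sub>m n \<and> C * A = 1\<^sub>m n"] B AB BA
    unfolding minv_def by blast
  have "C = C * (A * B)" using AB C(1) by simp
  also have "\<dots> = B" using assoc_mult_mat[OF C(1) A B] C(3) B by simp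
  finally show ?thesis using \<open>minv n A = C\<close> by simp
qed

lemma minv_monomial_mat:
  assumes "\<sigma> permutes {..<n}" and "\<forall>j<n. x j \<noteq> 0"
  shows "minv n (monomial_mat n \<sigma> x)
           = monomial_mat n (Hilbert_Choice.inv \<sigma>) (\<lambda>j. inverse (x (Hilbert_Choice.inv \<sigma> j)))"
  using monomial_mat_inverse[OF assms] by (intro minv_eqI) auto

lemma frob2_permute:
  assumes \<sigma>: "\<sigma> permutes {..<dim_row A}" and \<tau>: "\<tau> permutes {..<dim_col A}"
  shows "frob2 A = (\<Sum>i<dim_row A. \<Sum>j<dim_col A. (A $$ (\<sigma> i, \<tau> j))\<^sup>2)"
proof -
  have "frob2 A = (\<Sum>i<dim_row A. \<Sum>j<dim_col A. (A $$ (\<sigma> i, j))\<^sup>2)"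
    unfolding frob2_def by (subst sum.permute[OF \<sigma>]) (simp add: comp_def)
  also have "\<dots> = (\<Sum>i<dim_row A. \<Sum>j<dim_col A. (A $$ (\<sigma> i, \<tau> j))\<^sup>2)"
    by (rule sum.cong[OF refl]) (subst sum.permute[OF \<tau>], simp add: comp_def)
  finally show ?thesis .
qed

definition weighted_frob2 :: "(nat \<Rightarrow> real) \<Rightarrow> (nat \<Rightarrow> real) \<Rightarrow> real mat \<Rightarrow> real" where
  "weighted_frob2 x y A = (\<Sum>i<dim_row A. \<Sum>j<dim_col A. (x i * A $$ (i, j) / y j)\<^sup>2)"

definition weighted_vnorm2 :: "(nat \<Rightarrow> real) \<Rightarrow> real vec \<Rightarrow> real" where
  "weighted_vnorm2 x v = (\<Sum>i<dim_vec v. (x i * v $ i)\<^sup>2)"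

lemma frob2_eq_weighted_frob2: "frob2 A = weighted_frob2 (\<lambda>_. 1) (\<lambda>_. 1) A"
  by (simp add: frob2_def weighted_frob2_def)

lemma vnorm2_eq_weighted_vnorm2: "vnorm2 v = weighted_vnorm2 (\<lambda>_. 1) v"
  by (simp add: vnorm2_def weighted_vnorm2_def)

lemma frob2_monomial_conj:
  assumes A: "A \<in> carrier_mat n m" and \<sigma>: "\<sigma> permutes {..<n}" and \<tau>: "\<tau> permutes {..<m}"
    and y: "\<forall>j<m. y j \<noteq> 0"
  shows "frob2 (monomial_mat n \<sigma> x * A * minv m (monomial_mat m \<tau> y)) = weighted_frob2 x y A"
proof -
  define C where "C = monomial_mat n \<sigma> x * A * minv m (monomial_mat m \<tau> y)"
  have C_eq: "C = mat n m (\<lambda>(i, j). (monomial_mat n \<sigma> x * A) $$ (i, Hilbert_Choice.inv \<tau> j)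
                                    * inverse (y (Hilbert_Choice.inv \<tau> j)))"
    unfolding C_def minv_monomial_mat[OF \<tau> y]
    by (rule mult_monomial_mat[OF mult_carrier_mat[OF monomial_mat_carrier A] permutes_inv[OF \<tau>]])
  have entry: "C $$ (\<sigma> i, \<tau> j) = x i * A $$ (i, j) / y j" if i: "i < n" and j: "j < m" for i j
    using C_eq permutes_in_image[OF \<sigma>] permutes_in_image[OF \<tau>] permutes_inverses(2)[OF \<tau>]
      monomial_mat_mult_index[OF A \<sigma> i j] i j by (simp add: divide_inverse)
  have "dim_row C = n" "dim_col C = m" using C_eq by simp_all
  then have "frob2 C = (\<Sum>i<n. \<Sum>j<m. (C $$ (\<sigma> i, \<tau> j))\<^sup>2)"
    using frob2_permute[of \<sigma> C \<tau>] \<sigma> \<tau> by simp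
  also have "\<dots> = weighted_frob2 x y A"
    using entry A by (simp add: weighted_frob2_def)
  finally show ?thesis unfolding C_def .
qed

lemma vnorm2_monomial_mult:
  assumes v: "v \<in> carrier_vec n" and \<sigma>: "\<sigma> permutes {..<n}"
  shows "vnorm2 (monomial_mat n \<sigma> x *\<^sub>v v) = weighted_vnorm2 x v"
proof -
  define w where "w = monomial_mat n \<sigma> x *\<^sub>v v"
  have "dim_vec w = n" by (simp add: w_def)
  then have "vnorm2 w = (\<Sum>i<n. (w $ \<sigma> i)\<^sup>2)"
    unfolding vnorm2_def by (simp add: sum.permute[OF \<sigma>, of "\<lambda>i. (w $ i)\<^sup>2"] comp_def)
  also have "\<dots> = weighted_vnorm2 x v"
    using monomial_mat_mult_vec_index[OF v \<sigma>] v by (simp add: w_def weighted_vnorm2_def)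
  finally show ?thesis unfolding w_def .
qed

lemma perm_matrix_monomial_mat: "\<sigma> permutes {..<n} \<Longrightarrow> perm_matrix n (monomial_mat n \<sigma> (\<lambda>_. 1))"
  unfolding perm_matrix_def by (auto simp: monomial_mat_def)

lemma perm_matrix_imp_monomial_mat:
  assumes "perm_matrix n P"
  obtains \<sigma> where "\<sigma> permutes {..<n}" and "P = monomial_mat n \<sigma> (\<lambda>_. 1)"
proof -
  obtain \<sigma> where \<sigma>: "\<sigma> permutes {..<n}"
    and P: "P \<in> carrier_mat n n" "\<forall>i<n. \<forall>j<n. P $$ (i, j) = (if i = \<sigma> j then 1 else 0)"
    using assms unfolding perm_matrix_def by blast
  have "P = monomial_mat n \<sigma> (\<lambda>_. 1)"
    using P by (intro eq_matI) (auto simp: monomial_mat_def)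
  with \<sigma> show ?thesis by (rule that)
qed

lemma pos_diag_matrix_monomial_mat: "(\<And>i. i < n \<Longrightarrow> 0 < x i) \<Longrightarrow> pos_diag_matrix n (monomial_mat n id x)"
  unfolding pos_diag_matrix_def diagonal_mat_def by (auto simp: monomial_mat_def)

lemma pos_diag_matrix_eq_monomial_mat:
  "pos_diag_matrix n D \<Longrightarrow> D = monomial_mat n id (\<lambda>i. D $$ (i, i))"
  unfolding pos_diag_matrix_def diagonal_mat_def by (auto simp: monomial_mat_def intro!: eq_matI)

lemma monomial_mat_eq_perm_mult_diag:
  "monomial_mat n \<sigma> (x :: nat \<Rightarrow> real) = monomial_mat n \<sigma> (\<lambda>_. 1) * monomial_mat n id x"
  by (simp add: monomial_mat_mult_monomial_mat[OF permutes_id])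

lemma perm_matrix_mult_pos_diag:
  assumes "perm_matrix n P" and "pos_diag_matrix n D"
  obtains \<sigma> where "\<sigma> permutes {..<n}" and "P * D = monomial_mat n \<sigma> (\<lambda>i. D $$ (i, i))"
proof -
  obtain \<sigma> where \<sigma>: "\<sigma> permutes {..<n}" and P: "P = monomial_mat n \<sigma> (\<lambda>_. 1)"
    using perm_matrix_imp_monomial_mat[OF assms(1)] .
  define \<delta> where "\<delta> = (\<lambda>i. D $$ (i, i))"
  have D: "D = monomial_mat n id \<delta>"
    unfolding \<delta>_def by (rule pos_diag_matrix_eq_monomial_mat[OF assms(2)])
  have "P * D = monomial_mat n \<sigma> \<delta>"
    unfolding P D by (rule monomial_mat_eq_perm_mult_diag[symmetric])
  with \<sigma> show ?thesis unfolding \<delta>_def by (rule that)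
qed

lemma monomial_family_in_G_scaled:
  assumes perm: "\<And>l. \<sigma> l permutes {..<d l}" and pos: "\<And>l i. i < d l \<Longrightarrow> 0 < \<delta> l i"
    and ends: "\<sigma> 0 = id" "\<sigma> L = id" "\<And>i. i < d 0 \<Longrightarrow> \<delta> 0 i = 1" "\<And>i. i < d L \<Longrightarrow> \<delta> L i = 1"
  shows "(\<lambda>l. monomial_mat (d l) (\<sigma> l) (\<delta> l)) \<in> G_scaled L d"
  unfolding G_scaled_def
proof (intro CollectI conjI allI impI)
  have "monomial_mat (d l) (\<sigma> l) (\<delta> l) = 1\<^sub>m (d l)" if "l = 0 \<or> l = L" for l
    unfolding monomial_mat_id_one[symmetric] using that ends by (intro monomial_mat_cong) auto
  then show "monomial_mat (d 0) (\<sigma> 0) (\<delta> 0) = 1\<^sub>m (d 0)"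
    and "monomial_mat (d L) (\<sigma> L) (\<delta> L) = 1\<^sub>m (d L)" by simp_all
  fix l
  show "\<exists>Pt D. perm_matrix (d l) Pt \<and> pos_diag_matrix (d l) D \<and> monomial_mat (d l) (\<sigma> l) (\<delta> l) = Pt * D"
    using perm_matrix_monomial_mat[OF perm[of l]] pos_diag_matrix_monomial_mat[of "d l" "\<delta> l", OF pos]
      monomial_mat_eq_perm_mult_diag[of "d l" "\<sigma> l" "\<delta> l"] by blast
qed

lemma sqrt_scaling_sq_le:
  fixes x y a :: real
  assumes "0 < x" "0 < y"
  shows "2 * (sqrt x * a / sqrt y)\<^sup>2 \<le> a\<^sup>2 + (x * a / y)\<^sup>2"
proof -
  define t where "t = x / y"
  have "(sqrt x * a / sqrt y)\<^sup>2 = t * a\<^sup>2" "(x * a / y)\<^sup>2 = t\<^sup>2 * a\<^sup>2"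
    using assms by (simp_all add: t_def power_divide power_mult_distrib)
  moreover have "0 \<le> (t - 1)\<^sup>2 * a\<^sup>2" by simp
  ultimately show ?thesis by (simp add: power2_eq_square algebra_simps)
qed

lemma weighted_frob2_sqrt_le:
  assumes "\<forall>i<dim_row A. 0 < x i" "\<forall>j<dim_col A. 0 < y j"
  shows "2 * weighted_frob2 (\<lambda>i. sqrt (x i)) (\<lambda>j. sqrt (y j)) A
           \<le> weighted_frob2 (\<lambda>_. 1) (\<lambda>_. 1) A + weighted_frob2 x y A"
  unfolding weighted_frob2_def sum_distrib_left sum.distrib[symmetric]
  using assms sqrt_scaling_sq_le by (intro sum_mono) auto

lemma weighted_vnorm2_sqrt_eq:
  assumes "\<forall>i<dim_vec v. 0 \<le> x i"
  shows "2 * weighted_vnorm2 (\<lambda>i. sqrt (x i)) v + (\<Sum>i<dim_vec v. (x i - 1)\<^sup>2 * (v $ i)\<^sup>2)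
           = weighted_vnorm2 (\<lambda>_. 1) v + weighted_vnorm2 x v"
  unfolding weighted_vnorm2_def sum_distrib_left sum.distrib[symmetric]
  using assms by (intro sum.cong refl) (auto simp: power2_eq_square algebra_simps)

definition feedforward_energy :: "rnn_params \<Rightarrow> (nat \<Rightarrow> nat \<Rightarrow> real) \<Rightarrow> nat \<Rightarrow> real" where
  "feedforward_energy \<theta> \<delta> l =
     weighted_frob2 (\<delta> l) (\<delta> (l - 1)) (Wff \<theta> (l - 1)) + weighted_vnorm2 (\<delta> l) (bias \<theta> (l - 1))"

definition rnn_energy :: "nat \<Rightarrow> rnn_params \<Rightarrow> (nat \<Rightarrow> nat \<Rightarrow> real) \<Rightarrow> real" where
  "rnn_energy L \<theta> \<delta> = feedforward_energy \<theta> \<delta> L +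
     (\<Sum>l\<in>{1..<L}. weighted_frob2 (\<delta> l) (\<delta> l) (Wrec \<theta> l) + feedforward_energy \<theta> \<delta> l)"

definition bias_scaling_defect :: "rnn_params \<Rightarrow> (nat \<Rightarrow> nat \<Rightarrow> real) \<Rightarrow> nat \<Rightarrow> real" where
  "bias_scaling_defect \<theta> \<delta> l = (\<Sum>i<dim_vec (bias \<theta> (l - 1)). (\<delta> l i - 1)\<^sup>2 * (bias \<theta> (l - 1) $ i)\<^sup>2)"

lemma rnn_norm_eq_sqrt_energy: "rnn_norm L \<theta> = sqrt (rnn_energy L \<theta> (\<lambda>_ _. 1))"
  by (simp add: rnn_norm_def rnn_energy_def feedforward_energy_def add.assoc
      frob2_eq_weighted_frob2 vnorm2_eq_weighted_vnorm2)

lemma rnn_wf_layer: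
  assumes wf: "rnn_wf L d \<theta>" and "1 \<le> l" "l \<le> L"
  shows "Wff \<theta> (l - 1) \<in> carrier_mat (d l) (d (l - 1))" "bias \<theta> (l - 1) \<in> carrier_vec (d l)"
    and "l < L \<Longrightarrow> Wrec \<theta> l \<in> carrier_mat (d l) (d l)"
proof -
  have "l - 1 < L" "Suc (l - 1) = l" using assms(2,3) by auto
  then show "Wff \<theta> (l - 1) \<in> carrier_mat (d l) (d (l - 1))" "bias \<theta> (l - 1) \<in> carrier_vec (d l)"
    and "l < L \<Longrightarrow> Wrec \<theta> l \<in> carrier_mat (d l) (d l)"
    using wf unfolding rnn_wf_def by metis+
qed

context
  fixes L :: nat and d :: "nat \<Rightarrow> nat" and \<theta> :: rnn_params and \<delta> :: "nat \<Rightarrow> nat \<Rightarrow> real"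
  assumes wf: "rnn_wf L d \<theta>" and pos: "\<And>l i. i < d l \<Longrightarrow> 0 < \<delta> l i"
begin

lemma rnn_norm_act_monomial:
  assumes L: "1 \<le> L" and perm: "\<And>l. \<sigma> l permutes {..<d l}"
  shows "rnn_norm L (rnn_act L d (\<lambda>l. monomial_mat (d l) (\<sigma> l) (\<delta> l)) \<theta>) = sqrt (rnn_energy L \<theta> \<delta>)"
proof -
  let ?\<theta>' = "rnn_act L d (\<lambda>l. monomial_mat (d l) (\<sigma> l) (\<delta> l)) \<theta>"
  have nonzero: "\<forall>i<d l. \<delta> l i \<noteq> 0" for l using pos by (metis less_irrefl)
  have ff: "feedforward_energy ?\<theta>' (\<lambda>_ _. 1) l = feedforward_energy \<theta> \<delta> l" if l: "1 \<le> l" "l \<le> L" for l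
  proof -
    have "l - 1 < L" "Suc (l - 1) = l" using l by auto
    then show ?thesis
      using frob2_monomial_conj[OF rnn_wf_layer(1)[OF wf l] perm perm nonzero]
        vnorm2_monomial_mult[OF rnn_wf_layer(2)[OF wf l] perm]
      by (simp add: feedforward_energy_def rnn_act_def frob2_eq_weighted_frob2 vnorm2_eq_weighted_vnorm2)
  qed
  have rec: "weighted_frob2 (\<lambda>_. 1) (\<lambda>_. 1) (Wrec ?\<theta>' l) = weighted_frob2 (\<delta> l) (\<delta> l) (Wrec \<theta> l)"
    if l: "1 \<le> l" "l < L" for l
    using frob2_monomial_conj[OF rnn_wf_layer(3)[OF wf l(1) less_imp_le[OF l(2)] l(2)] perm perm nonzero] l
    by (simp add: rnn_act_def frob2_eq_weighted_frob2)
  have "rnn_energy L ?\<theta>' (\<lambda>_ _. 1) = rnn_energy L \<theta> \<delta>"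
    unfolding rnn_energy_def using ff[OF L order_refl] ff rec
    by (intro arg_cong2[where f = "(+)"] sum.cong) auto
  then show ?thesis by (simp add: rnn_norm_eq_sqrt_energy)
qed

lemma feedforward_energy_sqrt_le:
  assumes "1 \<le> l" "l \<le> L"
  shows "2 * feedforward_energy \<theta> (\<lambda>l i. sqrt (\<delta> l i)) l + bias_scaling_defect \<theta> \<delta> l
           \<le> feedforward_energy \<theta> (\<lambda>_ _. 1) l + feedforward_energy \<theta> \<delta> l"
  using weighted_frob2_sqrt_le[of "Wff \<theta> (l - 1)" "\<delta> l" "\<delta> (l - 1)"]
    weighted_vnorm2_sqrt_eq[of "bias \<theta> (l - 1)" "\<delta> l"] rnn_wf_layer[OF wf assms] pos
  unfolding feedforward_energy_def bias_scaling_defect_def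
  by (fastforce simp: less_imp_le)

lemma rnn_energy_sqrt_le:
  assumes L: "1 \<le> L"
  shows "2 * rnn_energy L \<theta> (\<lambda>l i. sqrt (\<delta> l i)) + (\<Sum>l\<in>{1..L}. bias_scaling_defect \<theta> \<delta> l)
           \<le> rnn_energy L \<theta> (\<lambda>_ _. 1) + rnn_energy L \<theta> \<delta>"
proof -
  have layer: "2 * (weighted_frob2 (\<lambda>i. sqrt (\<delta> l i)) (\<lambda>i. sqrt (\<delta> l i)) (Wrec \<theta> l)
                    + feedforward_energy \<theta> (\<lambda>l i. sqrt (\<delta> l i)) l) + bias_scaling_defect \<theta> \<delta> l
      \<le> (weighted_frob2 (\<lambda>_. 1) (\<lambda>_. 1) (Wrec \<theta> l) + feedforward_energy \<theta> (\<lambda>_ _. 1) l)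
        + (weighted_frob2 (\<delta> l) (\<delta> l) (Wrec \<theta> l) + feedforward_energy \<theta> \<delta> l)"
    if l: "l \<in> {1..<L}" for l
    using weighted_frob2_sqrt_le[of "Wrec \<theta> l" "\<delta> l" "\<delta> l"] rnn_wf_layer(3)[OF wf, of l] pos
      feedforward_energy_sqrt_le[of l] l by fastforce
  have "{1..L} = insert L {1..<L}" using L by auto
  then have "(\<Sum>l\<in>{1..L}. bias_scaling_defect \<theta> \<delta> l)
      = bias_scaling_defect \<theta> \<delta> L + (\<Sum>l\<in>{1..<L}. bias_scaling_defect \<theta> \<delta> l)"
    by simp
  moreover have "(\<Sum>l\<in>{1..<L}. 2 * (weighted_frob2 (\<lambda>i. sqrt (\<delta> l i)) (\<lambda>i. sqrt (\<delta> l i)) (Wrec \<theta> l)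
                    + feedforward_energy \<theta> (\<lambda>l i. sqrt (\<delta> l i)) l) + bias_scaling_defect \<theta> \<delta> l)
      \<le> (\<Sum>l\<in>{1..<L}. (weighted_frob2 (\<lambda>_. 1) (\<lambda>_. 1) (Wrec \<theta> l) + feedforward_energy \<theta> (\<lambda>_ _. 1) l)
        + (weighted_frob2 (\<delta> l) (\<delta> l) (Wrec \<theta> l) + feedforward_energy \<theta> \<delta> l))"
    by (rule sum_mono) (rule layer)
  ultimately show ?thesis
    using feedforward_energy_sqrt_le[OF L order_refl]
    unfolding rnn_energy_def sum.distrib sum_distrib_left[symmetric] by (simp add: algebra_simps)
qed

lemma scaling_eq_one_of_energy_bounds:
  assumes L: "1 \<le> L"
    and bias: "\<forall>l<L. \<forall>i<d (Suc l). bias \<theta> l $ i \<noteq> 0"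
    and "rnn_energy L \<theta> (\<lambda>_ _. 1) \<le> rnn_energy L \<theta> (\<lambda>l i. sqrt (\<delta> l i))"
    and "rnn_energy L \<theta> \<delta> \<le> rnn_energy L \<theta> (\<lambda>_ _. 1)"
    and l: "1 \<le> l" "l \<le> L" and i: "i < d l"
  shows "\<delta> l i = 1"
proof -
  have defect_nonneg: "0 \<le> bias_scaling_defect \<theta> \<delta> k" for k
    unfolding bias_scaling_defect_def by (intro sum_nonneg) simp
  have "(\<Sum>k\<in>{1..L}. bias_scaling_defect \<theta> \<delta> k) \<le> 0"
    using rnn_energy_sqrt_le[OF L] assms(3,4) by linarith
  then have "bias_scaling_defect \<theta> \<delta> l = 0"
    using sum_nonneg_eq_0_iff[of "{1..L}" "bias_scaling_defect \<theta> \<delta>"] defect_nonneg l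
    by (simp add: order_antisym sum_nonneg)
  moreover have "dim_vec (bias \<theta> (l - 1)) = d l" using rnn_wf_layer(2)[OF wf l] by simp
  ultimately have "(\<delta> l i - 1)\<^sup>2 * (bias \<theta> (l - 1) $ i)\<^sup>2 = 0"
    unfolding bias_scaling_defect_def using i by (simp add: sum_nonneg_eq_0_iff)
  moreover have "bias \<theta> (l - 1) $ i \<noteq> 0"
    using bias l i by (metis Suc_pred' less_le_trans less_one not_le diff_less)
  ultimately show ?thesis by simp
qed

end

lemma X_min_monomial_scaling_eq_one:
  assumes L: "1 \<le> L" and wf: "rnn_wf L d \<theta>"
    and bias: "\<forall>l<L. \<forall>i<d (Suc l). bias \<theta> l $ i \<noteq> 0"
    and perm: "\<And>l. \<tau> l permutes {..<d l}" and pos: "\<And>l i. i < d l \<Longrightarrow> 0 < \<delta> l i"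
    and ends: "\<And>l. \<not> (0 < l \<and> l < L) \<Longrightarrow> \<tau> l = id \<and> \<delta> l = (\<lambda>_. 1)"
    and min: "\<theta> \<in> X_min L d \<theta>"
    and min': "rnn_act L d (\<lambda>l. monomial_mat (d l) (\<tau> l) (\<delta> l)) \<theta> \<in> X_min L d \<theta>"
    and l: "0 < l" "l < L" and i: "i < d l"
  shows "\<delta> l i = 1"
proof -
  define F where "F \<rho> = (\<lambda>l. monomial_mat (d l) (\<tau> l) (\<rho> l))" for \<rho> :: "nat \<Rightarrow> nat \<Rightarrow> real"
  have in_G: "F \<rho> \<in> G_scaled L d"
    if "\<And>l i. i < d l \<Longrightarrow> 0 < \<rho> l i" "\<And>l i. \<not> (0 < l \<and> l < L) \<Longrightarrow> \<rho> l i = 1" for \<rho>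
    unfolding F_def using that ends by (intro monomial_family_in_G_scaled perm) auto
  have norm: "rnn_norm L (rnn_act L d (F \<rho>) \<theta>) = sqrt (rnn_energy L \<theta> \<rho>)"
    if "\<And>l i. i < d l \<Longrightarrow> 0 < \<rho> l i" for \<rho>
    unfolding F_def using rnn_norm_act_monomial[OF wf that L perm] .
  have pos_sqrt: "0 < sqrt (\<delta> l i)" if "i < d l" for l i using pos[OF that] by simp
  moreover have "sqrt (\<delta> l i) = 1" if "\<not> (0 < l \<and> l < L)" for l i using ends[OF that] by simp
  ultimately have "F (\<lambda>l i. sqrt (\<delta> l i)) \<in> G_scaled L d" by (rule in_G)
  then have "rnn_norm L \<theta> \<le> rnn_norm L (rnn_act L d (F (\<lambda>l i. sqrt (\<delta> l i))) \<theta>)"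
    using min unfolding X_min_def by blast
  then have upper: "rnn_energy L \<theta> (\<lambda>_ _. 1) \<le> rnn_energy L \<theta> (\<lambda>l i. sqrt (\<delta> l i))"
    by (simp only: norm[of "\<lambda>l i. sqrt (\<delta> l i)", OF pos_sqrt] rnn_norm_eq_sqrt_energy[of L \<theta>]
        real_sqrt_le_iff)
  have "F (\<lambda>_ _. 1) \<in> G_scaled L d" by (rule in_G) simp_all
  then have "rnn_norm L (rnn_act L d (F \<delta>) \<theta>) \<le> rnn_norm L (rnn_act L d (F (\<lambda>_ _. 1)) \<theta>)"
    using min' unfolding F_def X_min_def by blast
  then have lower: "rnn_energy L \<theta> \<delta> \<le> rnn_energy L \<theta> (\<lambda>_ _. 1)"
    by (simp only: norm[OF pos] norm[of "\<lambda>_ _. 1"] zero_less_one real_sqrt_le_iff)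
  show ?thesis
    using scaling_eq_one_of_energy_bounds[OF wf pos L bias upper lower] l i by simp
qed

lemma perm_diag_family_eq_monomial_family:
  assumes PD: "\<forall>l. 0 < l \<and> l < L \<longrightarrow> perm_matrix (d l) (Pt l) \<and> pos_diag_matrix (d l) (D l)"
  obtains \<tau> where "\<And>l. \<tau> l permutes {..<d l}" and "\<And>l. \<not> (0 < l \<and> l < L) \<Longrightarrow> \<tau> l = id"
    and "(\<lambda>l. if 0 < l \<and> l < L then Pt l * D l else 1\<^sub>m (d l))
           = (\<lambda>l. monomial_mat (d l) (\<tau> l) (\<lambda>i. if 0 < l \<and> l < L then D l $$ (i, i) else 1))"
proof -
  have "\<forall>l. \<exists>s. 0 < l \<and> l < L \<longrightarrow>
      s permutes {..<d l} \<and> Pt l * D l = monomial_mat (d l) s (\<lambda>i. D l $$ (i, i))"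
    using perm_matrix_mult_pos_diag PD by metis
  then obtain \<sigma> where \<sigma>: "\<And>l. 0 < l \<and> l < L \<Longrightarrow>
      \<sigma> l permutes {..<d l} \<and> Pt l * D l = monomial_mat (d l) (\<sigma> l) (\<lambda>i. D l $$ (i, i))"
    by metis
  define \<tau> where "\<tau> = (\<lambda>l. if 0 < l \<and> l < L then \<sigma> l else id)"
  show ?thesis
  proof (rule that)
    show "\<tau> l permutes {..<d l}" for l using \<sigma> by (simp add: \<tau>_def permutes_id)
    show "\<tau> l = id" if "\<not> (0 < l \<and> l < L)" for l using that by (auto simp: \<tau>_def)
    show "(\<lambda>l. if 0 < l \<and> l < L then Pt l * D l else 1\<^sub>m (d l))
           = (\<lambda>l. monomial_mat (d l) (\<tau> l) (\<lambda>i. if 0 < l \<and> l < L then D l $$ (i, i) else 1))"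
    proof
      fix l
      show "(if 0 < l \<and> l < L then Pt l * D l else 1\<^sub>m (d l))
          = monomial_mat (d l) (\<tau> l) (\<lambda>i. if 0 < l \<and> l < L then D l $$ (i, i) else 1)"
      proof (cases "0 < l \<and> l < L")
        case True
        then show ?thesis using \<sigma>[OF True] by (simp add: \<tau>_def)
      next
        case False
        then show ?thesis unfolding \<tau>_def by (simp only: False if_False monomial_mat_id_one)
      qed
    qed
  qed
qed

theorem mainTheorem5:
  fixes L :: nat and d :: "nat \<Rightarrow> nat" and \<theta> :: rnn_params
    and Pt D :: "nat \<Rightarrow> real mat"
  assumes "1 \<le> L"
    and "rnn_wf L d \<theta>"
    and "\<forall>l<L. \<forall>i<d (Suc l). bias \<theta> l $ i \<noteq> 0"
    and "\<forall>l. 0 < l \<and> l < L \<longrightarrow> perm_matrix (d l) (Pt l) \<and> pos_diag_matrix (d l) (D l)"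
    and "\<theta> \<in> X_min L d \<theta>"
    and "rnn_act L d (\<lambda>l. if 0 < l \<and> l < L then Pt l * D l else 1\<^sub>m (d l)) \<theta> \<in> X_min L d \<theta>"
  shows "\<forall>l. 0 < l \<and> l < L \<longrightarrow> D l = 1\<^sub>m (d l)"
proof (intro allI impI)
  fix l assume l: "0 < l \<and> l < L"
  define \<delta> where "\<delta> = (\<lambda>l i. if 0 < l \<and> l < L then D l $$ (i, i) else 1)"
  obtain \<tau> where perm: "\<And>l. \<tau> l permutes {..<d l}" and \<tau>_id: "\<And>l. \<not> (0 < l \<and> l < L) \<Longrightarrow> \<tau> l = id"
    and family: "(\<lambda>l. if 0 < l \<and> l < L then Pt l * D l else 1\<^sub>m (d l)) = (\<lambda>l. monomial_mat (d l) (\<tau> l) (\<delta> l))"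
    using perm_diag_family_eq_monomial_family[OF assms(4)] unfolding \<delta>_def by blast
  have pos: "0 < \<delta> l i" if "i < d l" for l i
    using assms(4) that unfolding \<delta>_def pos_diag_matrix_def by auto
  have ends: "\<tau> l = id \<and> \<delta> l = (\<lambda>_. 1)" if "\<not> (0 < l \<and> l < L)" for l
    using that \<tau>_id by (auto simp: \<delta>_def)
  have "D l = monomial_mat (d l) id (\<lambda>i. D l $$ (i, i))"
    using assms(4) l pos_diag_matrix_eq_monomial_mat by blast
  also have "\<dots> = monomial_mat (d l) id (\<lambda>_. 1)"
    using X_min_monomial_scaling_eq_one[OF assms(1-3) perm pos ends assms(5)] assms(6) l
    by (intro monomial_mat_cong) (simp add: family \<delta>_def)
  finally show "D l = 1\<^sub>m (d l)" by (simp add: monomial_mat_id_one)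
qed

end
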